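(* Let $1\le n\le L$. If $q_i=0$ for all $i=1,\dots,n$, then $$Z_{L,n}=(p_1\cdots p_n)^{L-n}\,h_{L-n}\!\left(\frac{1}{p_1},\dots,\frac{1}{p_n}\right),$$ where $h_m(x_1,\dots,x_n)=\sum_{1\le i_1\le\cdots\le i_m\le n}x_{i_1}\cdots x_{i_m}$ is the complete homogeneous symmetric polynomial of degree $m$.
   Context: Particle labels are taken modulo $n$. $\Omega_{L,n}$ is the set of words $w_1\cdots w_L$ on the ring $\mathbb{Z}/L\mathbb{Z}$ over the alphabet $\{\bullet_1,\dots,\bullet_n,\Box_1,\dots,\Box_n\}$ in which each $\bullet_k$ occurs exactly once, the $\bullet_1,\dots,\bullet_n$ appear in this cyclic order, and the remaining $L-n$ letters are arbitrary $\Box_i$'s. For $w\in\Omega_{L,n}$ let $b_k$ be the position of $\bullet_k$ and $C_k$ the set of positions strictly between $b_k$ and $b_{k+1}$ going cyclically forward ($b_{n+1}=b_1$). For $i,k\in\{1,\dots,n\}$ set $w_\Box(i,k)=p_1\cdots p_{i-1}q_{i+1}\cdots q_kp_{k+1}\cdots p_n$ if $i\le k$ and $w_\Box(i,k)=q_1\cdots q_kp_{k+1}\cdots p_{i-1}q_{i+1}\cdots q_n$ if $k<i$ (empty products are $1$). The weight is $\mathrm{wt}(w)=\prod_{k=1}^n\prod_{j\in C_k}w_\Box(i_j,k)$ where $w_j=\Box_{i_j}$. The restricted partition function is the polynomial $Z_{L,n}=\sum\mathrm{wt}(w)$, summed over $w\in\Omega_{L,n}$ with $w_1=\bullet_1$;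 the claim concerns its specialization at $q_1=\cdots=q_n=0$. *)

theory Defs
  imports Main
begin

(* Letters: Bul k = \<bullet>_k (particle k),  Box i = \<box>_i.
   A word on the ring Z/LZ is a list of length L; paper position j (1..L)
   corresponds to list index j-1 (0..L-1). *)
datatype letter = Bul nat | Box nat

fun box_idx :: "letter \<Rightarrow> nat" where
  "box_idx (Box i) = i"
| "box_idx (Bul k) = 0"

definition bpos :: "letter list \<Rightarrow> nat \<Rightarrow> nat" where
  "bpos w k = (THE j. j < length w \<and> w ! j = Bul k)"

definition cyclic_order :: "nat \<Rightarrow> nat \<Rightarrow> letter list \<Rightarrow> bool" where
  "cyclic_order L n w \<longleftrightarrow>
     (\<exists>s::int. \<forall>k\<in>{1..<n}.
        (int (bpos w k) - s) mod int L < (int (bpos w (k+1)) - s) mod int L)"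

definition Omega :: "nat \<Rightarrow> nat \<Rightarrow> letter list set" where
  "Omega L n = {w. length w = L
      \<and> (\<forall>j<L. w ! j \<in> Bul ` {1..n} \<union> Box ` {1..n})
      \<and> (\<forall>k\<in>{1..n}. card {j. j < L \<and> w ! j = Bul k} = 1)
      \<and> cyclic_order L n w}"

definition nextlab :: "nat \<Rightarrow> nat \<Rightarrow> nat" where
  "nextlab n k = (if k = n then 1 else k + 1)"

(* C_k: positions strictly between b_k and b_{k+1}, going cyclically forward;
   if b_{k+1} = b_k (n = 1) this is all positions except b_k *)
definition Cset :: "nat \<Rightarrow> letter list \<Rightarrow> nat \<Rightarrow> nat set" where
  "Cset n w k = (let L = length w; b = int (bpos w k);
                     D = (int (bpos w (nextlab n k)) - b) mod int L;
                     D' = (if D = 0 then int L else D)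
                 in {j. j < L \<and> 0 < (int j - b) mod int L \<and> (int j - b) mod int L < D'})"

definition wbox :: "nat \<Rightarrow> (nat \<Rightarrow> 'a::comm_ring_1) \<Rightarrow> (nat \<Rightarrow> 'a) \<Rightarrow> nat \<Rightarrow> nat \<Rightarrow> 'a" where
  "wbox n p q i k = (if i \<le> k
      then (\<Prod>j\<in>{1..<i}. p j) * (\<Prod>j\<in>{i+1..k}. q j) * (\<Prod>j\<in>{k+1..n}. p j)
      else (\<Prod>j\<in>{1..k}. q j) * (\<Prod>j\<in>{k+1..<i}. p j) * (\<Prod>j\<in>{i+1..n}. q j))"

definition wt :: "nat \<Rightarrow> (nat \<Rightarrow> 'a::comm_ring_1) \<Rightarrow> (nat \<Rightarrow> 'a) \<Rightarrow> letter list \<Rightarrow> 'a" where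
  "wt n p q w = (\<Prod>k\<in>{1..n}. \<Prod>j\<in>Cset n w k. wbox n p q (box_idx (w ! j)) k)"

definition Zpart :: "nat \<Rightarrow> nat \<Rightarrow> (nat \<Rightarrow> 'a::comm_ring_1) \<Rightarrow> (nat \<Rightarrow> 'a) \<Rightarrow> 'a" where
  "Zpart L n p q = (\<Sum>w\<in>{w \<in> Omega L n. w ! 0 = Bul 1}. wt n p q w)"

definition hcomp :: "nat \<Rightarrow> nat \<Rightarrow> (nat \<Rightarrow> 'a::comm_ring_1) \<Rightarrow> 'a" where
  "hcomp m n x = (\<Sum>is\<in>{is. length is = m \<and> sorted is \<and> set is \<subseteq> {1..n}}. prod_list (map x is))"

end

(*
  At q = 0 the factor w_\<Box>(i,k) vanishes unless i = k, and w_\<Box>(k,k) = p_1 \<cdots> p_n / p_k.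
  So a word contributes only if every gap C_k is filled with \<Box>_k's.  Since w_1 = \<bullet>_1 and the
  bullets are in cyclic order, such a word is \<bullet>_1 \<Box>_1^c_1 \<cdots> \<bullet>_n \<Box>_n^c_n, determined by its
  gap sizes c with c_1 + \<cdots> + c_n = L - n, and its weight is (p_1 \<cdots> p_n)^(L-n) times the
  monomial \<Prod> (1/p_k)^c_k.  Summing over all c is exactly the monomial expansion of h_(L-n).
*)

theory Submission
  imports Defs "HOL-Library.Multiset" "HOL-Library.FuncSet"
begin

section \<open>Complete homogeneous polynomials as sums over exponent vectors\<close>

text \<open>Exponent vectors are extensional, so that distinct vectors give distinct monomials.\<close>

definition exponents :: "nat \<Rightarrow> nat \<Rightarrow> (nat \<Rightarrow> nat) set" where
  "exponents m n = {c \<in> extensional {1..n}. (\<Sum>k\<in>{1..n}. c k) = m}"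

definition monomial_indices :: "nat \<Rightarrow> (nat \<Rightarrow> nat) \<Rightarrow> nat list" where
  "monomial_indices n c = concat (map (\<lambda>k. replicate (c k) k) [1..<Suc n])"

lemma monomial_indices_Suc:
  "monomial_indices (Suc n) c = monomial_indices n c @ replicate (c (Suc n)) (Suc n)"
  by (simp add: monomial_indices_def)

lemma monomial_indices_cong:
  "(\<And>k. k \<in> {1..n} \<Longrightarrow> c k = d k) \<Longrightarrow> monomial_indices n c = monomial_indices n d"
  unfolding monomial_indices_def by (intro arg_cong[where f = concat] map_cong) auto

lemma sorted_monomial_indices: "sorted (monomial_indices n c)"
  by (induction n) (auto simp: monomial_indices_Suc sorted_append monomial_indices_def)

lemma set_monomial_indices: "set (monomial_indices n c) \<subseteq> {1..n}"
  by (induction n) (auto simp: monomial_indices_Suc monomial_indices_def)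

lemma length_monomial_indices: "length (monomial_indices n c) = (\<Sum>k\<in>{1..n}. c k)"
  by (induction n) (auto simp: monomial_indices_Suc monomial_indices_def)

lemma count_list_monomial_indices:
  "count_list (monomial_indices n c) k = (if k \<in> {1..n} then c k else 0)"
proof (induction n)
  case (Suc n)
  then show ?case
    by (cases "k = Suc n") (auto simp: monomial_indices_Suc count_list_eq_length_filter)
qed (simp add: monomial_indices_def)

lemma prod_list_monomial_indices:
  "prod_list (map x (monomial_indices n c)) = (\<Prod>k\<in>{1..n}. x k ^ c k)"
  by (induction n) (auto simp: monomial_indices_Suc monomial_indices_def)

lemma monomial_indices_count_list:
  assumes "sorted xs" and "set xs \<subseteq> {1..n}"
  shows "monomial_indices n (count_list xs) = xs"
proof -
  have "mset (monomial_indices n (count_list xs)) = mset xs"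
    using assms(2) by (intro multiset_eqI) (auto simp: count_mset count_list_monomial_indices count_list_0_iff)
  then have "sort xs = monomial_indices n (count_list xs)"
    by (intro properties_for_sort sorted_monomial_indices)
  then show ?thesis
    using sorted_sort_id[OF assms(1)] by simp
qed

lemma hcomp_eq_sum_exponents:
  "hcomp m n x = (\<Sum>c\<in>exponents m n. \<Prod>k\<in>{1..n}. x k ^ c k)"
proof -
  have "bij_betw (monomial_indices n) (exponents m n)
          {xs. length xs = m \<and> sorted xs \<and> set xs \<subseteq> {1..n}}" (is "bij_betw _ _ ?S")
  proof (rule bij_betw_byWitness[where f' = "\<lambda>xs. restrict (count_list xs) {1..n}"])
    show "\<forall>c\<in>exponents m n. restrict (count_list (monomial_indices n c)) {1..n} = c"
      by (auto simp: exponents_def count_list_monomial_indices extensional_def)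
    show "\<forall>xs\<in>?S. monomial_indices n (restrict (count_list xs) {1..n}) = xs"
      using monomial_indices_cong[of n "restrict _ {1..n}"] monomial_indices_count_list by auto
    show "monomial_indices n ` exponents m n \<subseteq> ?S"
      by (auto simp: exponents_def length_monomial_indices sorted_monomial_indices
          dest: set_monomial_indices[THEN subsetD])
    show "(\<lambda>xs. restrict (count_list xs) {1..n}) ` ?S \<subseteq> exponents m n"
      by (auto simp: exponents_def sum_count_set)
  qed
  then show ?thesis
    unfolding hcomp_def by (simp add: sum.reindex_bij_betw[symmetric] prod_list_monomial_indices)
qed

section \<open>Block words\<close>

definition block_word :: "nat \<Rightarrow> (nat \<Rightarrow> nat) \<Rightarrow> letter list" where
  "block_word n c = concat (map (\<lambda>k. Bul k # replicate (c k) (Box k)) [1..<Suc n])"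

definition block_start :: "(nat \<Rightarrow> nat) \<Rightarrow> nat \<Rightarrow> nat" where
  "block_start c k = (\<Sum>i\<in>{1..<k}. Suc (c i))"

lemma block_word_Suc:
  "block_word (Suc n) c = block_word n c @ Bul (Suc n) # replicate (c (Suc n)) (Box (Suc n))"
  by (simp add: block_word_def)

lemma block_start_Suc: "1 \<le> k \<Longrightarrow> block_start c (Suc k) = block_start c k + Suc (c k)"
  unfolding block_start_def by (simp add: atLeastLessThanSuc add.commute)

lemma block_start_1 [simp]: "block_start c (Suc 0) = 0"
  by (simp add: block_start_def)

lemma block_start_less:
  assumes "1 \<le> k" and "k < k'"
  shows "block_start c k + Suc (c k) \<le> block_start c k'"
proof -
  have "block_start c (Suc k) \<le> block_start c k'"
    unfolding block_start_def using assms by (intro sum_mono2) auto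
  then show ?thesis
    using block_start_Suc[OF assms(1)] by simp
qed

lemma length_block_word: "length (block_word n c) = block_start c (Suc n)"
  by (induction n) (auto simp: block_word_Suc block_start_Suc block_word_def)

lemma length_block_word_eq_sum: "length (block_word n c) = n + (\<Sum>k\<in>{1..n}. c k)"
  by (induction n) (auto simp: block_word_Suc block_word_def)

lemma nth_block_word:
  assumes "k \<in> {1..n}" and "i \<le> c k"
  shows "block_word n c ! (block_start c k + i) = (if i = 0 then Bul k else Box k)"
  using assms
proof (induction n)
  case (Suc n)
  show ?case
  proof (cases "k = Suc n")
    case True
    then show ?thesis
      using Suc.prems by (auto simp: block_word_Suc nth_append length_block_word)
  next
    case False
    then have k: "k \<in> {1..n}"
      using Suc.prems by auto
    have "block_start c k + i < block_start c (Suc n)"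
      using block_start_less[of k "Suc n" c] k Suc.prems by auto
    then show ?thesis
      using Suc.IH[OF k Suc.prems(2)] by (auto simp: block_word_Suc nth_append length_block_word)
  qed
qed simp

lemma block_word_cover:
  assumes "j < length (block_word n c)"
  obtains k i where "k \<in> {1..n}" and "i \<le> c k" and "j = block_start c k + i"
  using assms
proof (induction n)
  case (Suc n)
  show ?case
  proof (cases "j < block_start c (Suc n)")
    case True
    then show ?thesis
      using Suc.IH Suc.prems(1) by (force simp: length_block_word)
  next
    case False
    then show ?thesis
      using Suc.prems block_start_Suc[of "Suc n" c]
      by (auto simp: length_block_word intro!: Suc.prems(1)[of "Suc n" "j - block_start c (Suc n)"])
  qed
qed (simp add: length_block_word)

lemma block_word_eqI:
  assumes "length w = length (block_word n c)"
    and "\<And>k i. k \<in> {1..n} \<Longrightarrow> i \<le> c k \<Longrightarrow>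
           w ! (block_start c k + i) = (if i = 0 then Bul k else Box k)"
  shows "w = block_word n c"
proof (rule nth_equalityI)
  fix j assume "j < length w"
  then obtain k i where "k \<in> {1..n}" "i \<le> c k" "j = block_start c k + i"
    using assms(1) block_word_cover by metis
  then show "w ! j = block_word n c ! j"
    using assms(2) nth_block_word by simp
qed (rule assms(1))

lemma block_start_less_length:
  "k \<in> {1..n} \<Longrightarrow> block_start c k + c k < length (block_word n c)"
  using block_start_less[of k "Suc n" c] by (cases "k = n") (auto simp: length_block_word block_start_Suc)

lemma nth_block_word_eq_Bul_iff:
  assumes "j < length (block_word n c)" and "k \<in> {1..n}"
  shows "block_word n c ! j = Bul k \<longleftrightarrow> j = block_start c k"
proof -
  obtain k' i where "k' \<in> {1..n}" "i \<le> c k'" "j = block_start c k' + i"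
    using block_word_cover[OF assms(1)] .
  then show ?thesis
    using nth_block_word[of k' n i c] nth_block_word[OF assms(2), of 0] by (cases "i = 0") auto
qed

lemma bpos_eqI:
  assumes "j < length w" and "w ! j = Bul k" and "\<And>j'. j' < length w \<Longrightarrow> w ! j' = Bul k \<Longrightarrow> j' = j"
  shows "bpos w k = j"
  unfolding bpos_def using assms by (intro the_equality) blast+

lemma bpos_block_word: "k \<in> {1..n} \<Longrightarrow> bpos (block_word n c) k = block_start c k"
  using block_start_less_length[of k n c] nth_block_word_eq_Bul_iff[of _ n c k] by (intro bpos_eqI) auto

definition rooted_words :: "nat \<Rightarrow> nat \<Rightarrow> letter list set" where
  "rooted_words L n = {w \<in> Omega L n. w ! 0 = Bul 1}"

lemma finite_Omega: "finite (Omega L n)"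
proof (rule finite_subset)
  show "Omega L n \<subseteq> {w. set w \<subseteq> Bul ` {1..n} \<union> Box ` {1..n} \<and> length w = L}"
    unfolding Omega_def by (auto simp: in_set_conv_nth)
qed (intro finite_lists_length_eq, simp)

lemma bpos_Omega:
  assumes "w \<in> Omega L n" and "k \<in> {1..n}"
  shows "bpos w k < L" and "w ! bpos w k = Bul k" and "\<And>j. j < L \<Longrightarrow> w ! j = Bul k \<Longrightarrow> j = bpos w k"
proof -
  have "card {j. j < L \<and> w ! j = Bul k} = 1"
    using assms unfolding Omega_def by simp
  then obtain b where b: "{j. j < L \<and> w ! j = Bul k} = {b}"
    by (rule card_1_singletonE)
  moreover have "length w = L"
    using assms(1) unfolding Omega_def by simp
  ultimately have "bpos w k = b"
    by (intro bpos_eqI) blast+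
  then show "bpos w k < L" "w ! bpos w k = Bul k" "\<And>j. j < L \<Longrightarrow> w ! j = Bul k \<Longrightarrow> j = bpos w k"
    using b by blast+
qed

lemma cyclic_order_residues_less:
  assumes "cyclic_order L n w"
  obtains s where "\<And>k k'. 1 \<le> k \<Longrightarrow> k < k' \<Longrightarrow> k' \<le> n \<Longrightarrow>
    (int (bpos w k) - s) mod int L < (int (bpos w k') - s) mod int L"
proof -
  obtain s where step: "\<And>k. k \<in> {1..<n} \<Longrightarrow>
      (int (bpos w k) - s) mod int L < (int (bpos w (k + 1)) - s) mod int L"
    using assms unfolding cyclic_order_def by blast
  have "(int (bpos w k) - s) mod int L < (int (bpos w k') - s) mod int L"
    if "k < k'" "1 \<le> k" "k' \<le> n" for k k'
    using that
  proof (induction rule: less_Suc_induct)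
    case (1 i)
    then show ?case
      using step[of i] by simp
  next
    case (2 i j k)
    then have "1 \<le> j" and "j \<le> n"
      by simp_all
    with 2 show ?case
      by (meson order.strict_trans)
  qed
  then show ?thesis
    using that by blast
qed

lemma bpos_rooted_1:
  assumes "w \<in> rooted_words L n" and "1 \<le> n"
  shows "bpos w 1 = 0"
proof -
  have \<Omega>: "w \<in> Omega L n" and "w ! 0 = Bul 1"
    using assms(1) unfolding rooted_words_def by simp_all
  moreover have "0 < L"
    using bpos_Omega(1)[OF \<Omega>, of 1] assms(2) by simp
  ultimately show ?thesis
    using bpos_Omega(3)[OF \<Omega>, of 1 0] assms(2) by simp
qed

lemma bpos_rooted_less:
  assumes w: "w \<in> rooted_words L n" and "1 \<le> k" and "k < k'" and "k' \<le> n"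
  shows "bpos w k < bpos w k'"
proof -
  have \<Omega>: "w \<in> Omega L n"
    using w unfolding rooted_words_def by simp
  obtain s where r_less: "\<And>k k'. 1 \<le> k \<Longrightarrow> k < k' \<Longrightarrow> k' \<le> n \<Longrightarrow>
      (int (bpos w k) - s) mod int L < (int (bpos w k') - s) mod int L"
    using \<Omega> cyclic_order_residues_less unfolding Omega_def by blast
  define r where "r k = (int (bpos w k) - s) mod int L" for k
  \<comment> \<open>As bpos w 1 = 0, the residues r determine the positions: bpos w k = r k - r 1.\<close>
  have L: "0 < L"
    using bpos_Omega(1)[OF \<Omega>, of 1] assms by auto
  have b_eq: "int (bpos w k) = r k - r 1" if k: "k \<in> {1..n}" for k
  proof -
    have "r 1 \<le> r k"
      using r_less[of 1 k] k unfolding r_def by (cases "k = 1") auto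
    moreover have "r k < int L" "0 \<le> r 1"
      using L unfolding r_def by simp_all
    ultimately have "r k - r 1 = (r k - r 1) mod int L"
      by (simp add: mod_pos_pos_trivial)
    also have "\<dots> = (int (bpos w k) - int (bpos w 1)) mod int L"
      unfolding r_def by (simp add: mod_diff_eq)
    also have "\<dots> = int (bpos w k)"
      using bpos_rooted_1[OF w] bpos_Omega(1)[OF \<Omega> k] k by simp
    finally show ?thesis
      by simp
  qed
  have "r k < r k'"
    using r_less assms unfolding r_def by blast
  then show ?thesis
    using b_eq[of k] b_eq[of k'] assms by simp
qed

lemma int_diff_mod_eq:
  assumes "j < L" and "b < (L::nat)"
  shows "(int j - int b) mod int L = (if b \<le> j then int j - int b else int j - int b + int L)"
proof (cases "b \<le> j")
  case True
  then show ?thesis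
    using assms by (simp add: mod_pos_pos_trivial)
next
  case False
  have "(int j - int b) mod int L = (int j - int b + int L) mod int L"
    by (simp only: mod_add_self2)
  also have "\<dots> = int j - int b + int L"
    using False assms by (intro mod_pos_pos_trivial) auto
  finally show ?thesis
    using False by simp
qed

lemma mod_diff_in_cyclic_interval_iff:
  assumes "j < L" and "b < e" and "e \<le> (L::nat)"
  shows "0 < (int j - int b) mod int L \<and> (int j - int b) mod int L < int e - int b
    \<longleftrightarrow> b < j \<and> j < e"
proof (cases "b \<le> j")
  case True
  then have "(int j - int b) mod int L = int j - int b"
    using int_diff_mod_eq[of j L b] assms by simp
  with True show ?thesis
    by auto
next
  case False
  then have "(int j - int b) mod int L = int j - int b + int L"
    using int_diff_mod_eq[of j L b] assms by simp
  with False assms(3) show ?thesis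
    by auto
qed

lemma Cset_rooted:
  assumes w: "w \<in> rooted_words L n" and k: "k \<in> {1..n}"
  shows "Cset n w k = {bpos w k<..<(if k < n then bpos w (Suc k) else L)}"
proof -
  define b where "b = bpos w k"
  define e where "e = (if k < n then bpos w (Suc k) else L)"
  have \<Omega>: "w \<in> Omega L n"
    using w unfolding rooted_words_def by simp
  then have len: "length w = L"
    unfolding Omega_def by simp
  have bL: "b < L"
    using bpos_Omega(1)[OF \<Omega> k] by (simp add: b_def)
  have be: "b < e" and eL: "e \<le> L"
    using bL bpos_rooted_less[OF w, of k "Suc k"] bpos_Omega(1)[OF \<Omega>, of "Suc k"] k
    by (auto simp: b_def e_def)
  have end_mod: "(if (int (bpos w (nextlab n k)) - int b) mod int L = 0 then int L
      else (int (bpos w (nextlab n k)) - int b) mod int L) = int e - int b"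
  proof (cases "k < n")
    case True
    then show ?thesis
      using be int_diff_mod_eq[of "bpos w (Suc k)" L b] bpos_Omega(1)[OF \<Omega>, of "Suc k"] k
      by (auto simp: nextlab_def e_def)
  next
    case False
    then show ?thesis
      using bpos_rooted_1[OF w] k bL int_diff_mod_eq[of 0 L b] by (auto simp: nextlab_def e_def)
  qed
  have "Cset n w k = {j. j < L \<and> 0 < (int j - int b) mod int L \<and> (int j - int b) mod int L < int e - int b}"
    unfolding Cset_def Let_def len b_def[symmetric] end_mod by (rule refl)
  also have "\<dots> = {b<..<e}"
    using mod_diff_in_cyclic_interval_iff[OF _ be eL] eL
    unfolding set_eq_iff mem_Collect_eq greaterThanLessThan_iff by (meson less_le_trans)
  finally show ?thesis
    unfolding b_def e_def .
qed

lemma block_word_rooted: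
  assumes "1 \<le> n" and "length (block_word n c) = L"
  shows "block_word n c \<in> rooted_words L n"
proof -
  have letters: "block_word n c ! j \<in> Bul ` {1..n} \<union> Box ` {1..n}" if "j < L" for j
  proof -
    obtain k i where "k \<in> {1..n}" "i \<le> c k" "j = block_start c k + i"
      using block_word_cover \<open>j < L\<close> assms(2) by metis
    then show ?thesis
      using nth_block_word by simp
  qed
  have unique: "card {j. j < L \<and> block_word n c ! j = Bul k} = 1" if "k \<in> {1..n}" for k
  proof -
    have "{j. j < L \<and> block_word n c ! j = Bul k} = {block_start c k}"
      using nth_block_word_eq_Bul_iff[OF _ that] block_start_less_length[OF that, of c] assms(2) by auto
    then show ?thesis
      by simp
  qed
  have "cyclic_order L n (block_word n c)"
    unfolding cyclic_order_def
  proof (intro exI[of _ 0] ballI)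
    fix k assume k: "k \<in> {1..<n}"
    then have "block_start c k < block_start c (k + 1)" "block_start c (k + 1) < L"
      using block_start_less[of k "k + 1" c] block_start_less_length[of "k + 1" n c] assms(2) by auto
    then show "(int (bpos (block_word n c) k) - 0) mod int L < (int (bpos (block_word n c) (k + 1)) - 0) mod int L"
      using k by (simp add: bpos_block_word)
  qed
  moreover have "block_word n c ! 0 = Bul 1"
    using nth_block_word[of 1 n 0 c] assms(1) by simp
  ultimately show ?thesis
    unfolding rooted_words_def Omega_def using assms(2) letters unique by blast
qed

lemma Cset_block_word:
  assumes "1 \<le> n" and "k \<in> {1..n}"
  shows "Cset n (block_word n c) k = {block_start c k<..<block_start c (Suc k)}"
proof -
  have "(if k < n then bpos (block_word n c) (Suc k) else length (block_word n c)) = block_start c (Suc k)"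
    using assms(2) bpos_block_word[of "Suc k" n c] by (auto simp: length_block_word)
  then show ?thesis
    using Cset_rooted[OF block_word_rooted[OF assms(1) refl] assms(2)]
    by (simp add: bpos_block_word[OF assms(2)])
qed

section \<open>Gap-consistent words are block words\<close>

definition gap_consistent :: "nat \<Rightarrow> letter list \<Rightarrow> bool" where
  "gap_consistent n w \<longleftrightarrow> (\<forall>k\<in>{1..n}. \<forall>j\<in>Cset n w k. w ! j = Box k)"

definition gap_sizes :: "nat \<Rightarrow> letter list \<Rightarrow> nat \<Rightarrow> nat" where
  "gap_sizes n w = restrict (\<lambda>k. card (Cset n w k)) {1..n}"

lemma gap_consistent_block_word:
  assumes "1 \<le> n"
  shows "gap_consistent n (block_word n c)"
  unfolding gap_consistent_def
proof (intro ballI)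
  fix k j assume k: "k \<in> {1..n}" and "j \<in> Cset n (block_word n c) k"
  then have "block_start c k < j" "j \<le> block_start c k + c k"
    using Cset_block_word[OF assms k] block_start_Suc[of k c] by auto
  then show "block_word n c ! j = Box k"
    using nth_block_word[of k n "j - block_start c k" c] k by simp
qed

lemma gap_sizes_block_word:
  assumes "1 \<le> n" and "c \<in> extensional {1..n}"
  shows "gap_sizes n (block_word n c) = c"
proof (rule extensionalityI[OF _ assms(2)])
  show "gap_sizes n (block_word n c) \<in> extensional {1..n}"
    by (simp add: gap_sizes_def)
  fix k assume "k \<in> {1..n}"
  then show "gap_sizes n (block_word n c) k = c k"
    using Cset_block_word[OF assms(1)] block_start_Suc[of k c] by (simp add: gap_sizes_def)
qed

lemma Suc_card_Cset_rooted:
  assumes w: "w \<in> rooted_words L n" and k: "k \<in> {1..n}"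
  shows "Suc (card (Cset n w k)) = (if k < n then bpos w (Suc k) else L) - bpos w k"
proof -
  have "w \<in> Omega L n"
    using w unfolding rooted_words_def by simp
  then have "bpos w k < (if k < n then bpos w (Suc k) else L)"
    using k bpos_rooted_less[OF w, of k "Suc k"] bpos_Omega(1)[of w L n k] by auto
  then show ?thesis
    unfolding Cset_rooted[OF w k] by simp
qed

lemma block_start_gap_sizes:
  assumes w: "w \<in> rooted_words L n" and "k \<in> {1..n}"
  shows "block_start (gap_sizes n w) k = bpos w k"
  using assms(2)
proof (induction k)
  case (Suc k)
  show ?case
  proof (cases "k = 0")
    case True
    then show ?thesis
      using bpos_rooted_1[OF w] Suc.prems by simp
  next
    case False
    then have k: "k \<in> {1..n}" "k < n"
      using Suc.prems by auto
    then show ?thesis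
      using Suc.IH block_start_Suc[of k] Suc_card_Cset_rooted[OF w k(1)]
        bpos_rooted_less[OF w, of k "Suc k"]
      by (simp add: gap_sizes_def)
  qed
qed simp

lemma block_word_gap_sizes:
  assumes w: "w \<in> rooted_words L n" and "1 \<le> n" and consistent: "gap_consistent n w"
  shows "block_word n (gap_sizes n w) = w"
proof -
  define c where "c = gap_sizes n w"
  have \<Omega>: "w \<in> Omega L n"
    using w unfolding rooted_words_def by simp
  have "w = block_word n c"
  proof (rule block_word_eqI)
    have "length (block_word n c) = block_start c n + Suc (c n)"
      using block_start_Suc[of n c] \<open>1 \<le> n\<close> by (simp add: length_block_word)
    also have "\<dots> = L"
      using block_start_gap_sizes[OF w, of n] Suc_card_Cset_rooted[OF w, of n]
        bpos_Omega(1)[OF \<Omega>, of n] \<open>1 \<le> n\<close>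
      by (simp add: c_def gap_sizes_def)
    finally show "length w = length (block_word n c)"
      using \<Omega> unfolding Omega_def by simp
  next
    fix k i assume k: "k \<in> {1..n}" and "i \<le> c k"
    then have "i = 0 \<or> bpos w k + i \<in> Cset n w k"
      using Suc_card_Cset_rooted[OF w k] Cset_rooted[OF w k] by (auto simp: c_def gap_sizes_def)
    then show "w ! (block_start c k + i) = (if i = 0 then Bul k else Box k)"
      using bpos_Omega(2)[OF \<Omega> k] block_start_gap_sizes[OF w k] consistent k
      unfolding gap_consistent_def c_def by auto
  qed
  then show ?thesis
    unfolding c_def ..
qed

lemma bij_betw_block_word:
  assumes "1 \<le> n" and "n \<le> L"
  shows "bij_betw (block_word n) (exponents (L - n) n) {w \<in> rooted_words L n. gap_consistent n w}"
proof (rule bij_betw_byWitness[where f' = "gap_sizes n"])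
  show "\<forall>c\<in>exponents (L - n) n. gap_sizes n (block_word n c) = c"
    using gap_sizes_block_word[OF assms(1)] by (auto simp: exponents_def)
  show "\<forall>w\<in>{w \<in> rooted_words L n. gap_consistent n w}. block_word n (gap_sizes n w) = w"
    using block_word_gap_sizes assms(1) by blast
  show "block_word n ` exponents (L - n) n \<subseteq> {w \<in> rooted_words L n. gap_consistent n w}"
  proof (rule image_subsetI)
    fix c assume "c \<in> exponents (L - n) n"
    then have "length (block_word n c) = L"
      using assms(2) by (simp add: exponents_def length_block_word_eq_sum)
    then show "block_word n c \<in> {w \<in> rooted_words L n. gap_consistent n w}"
      using block_word_rooted[OF assms(1)] gap_consistent_block_word[OF assms(1)] by blast
  qed
  show "gap_sizes n ` {w \<in> rooted_words L n. gap_consistent n w} \<subseteq> exponents (L - n) n"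
  proof clarify
    fix w assume "w \<in> rooted_words L n" and "gap_consistent n w"
    then have "length (block_word n (gap_sizes n w)) = L"
      using block_word_gap_sizes assms(1) unfolding rooted_words_def Omega_def by simp
    then have "(\<Sum>k\<in>{1..n}. gap_sizes n w k) = L - n"
      unfolding length_block_word_eq_sum by simp
    then show "gap_sizes n w \<in> exponents (L - n) n"
      by (simp add: exponents_def gap_sizes_def)
  qed
qed

section \<open>Weights at q = 0\<close>

lemma wbox_eq_0:
  assumes "\<forall>i\<in>{1..n}. q i = 0" and "k \<in> {1..n}" and "i \<noteq> k"
  shows "wbox n p q i k = 0"
proof (cases "i \<le> k")
  case True
  then have "(\<Prod>j\<in>{i+1..k}. q j) = 0"
    using assms by (intro prod_zero) (auto intro!: bexI[of _ k])
  with True show ?thesis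
    by (simp add: wbox_def)
next
  case False
  then have "(\<Prod>j\<in>{1..k}. q j) = 0"
    using assms by (intro prod_zero) (auto intro!: bexI[of _ k])
  with False show ?thesis
    by (simp add: wbox_def)
qed

lemma wbox_diag_mult:
  assumes "k \<in> {1..n}"
  shows "wbox n p q k k * p k = (\<Prod>i\<in>{1..n}. p i)"
proof -
  have "{1..n} = {1..<k} \<union> insert k {k+1..n}"
    using assms by auto
  then have "(\<Prod>i\<in>{1..n}. p i) = (\<Prod>i\<in>{1..<k}. p i) * (p k * (\<Prod>i\<in>{k+1..n}. p i))"
    by (simp only:) (subst prod.union_disjoint; auto)
  then show ?thesis
    by (simp add: wbox_def mult_ac)
qed

lemma wt_eq_0:
  assumes "\<forall>i\<in>{1..n}. q i = 0" and "\<not> gap_consistent n w"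
  shows "wt n p q w = 0"
proof -
  obtain k j where k: "k \<in> {1..n}" and j: "j \<in> Cset n w k" and "w ! j \<noteq> Box k"
    using assms(2) unfolding gap_consistent_def by blast
  then have "box_idx (w ! j) \<noteq> k"
    by (cases "w ! j") auto
  then have "wbox n p q (box_idx (w ! j)) k = 0"
    using wbox_eq_0[OF assms(1) k] by blast
  moreover have "finite (Cset n w k)"
    unfolding Cset_def Let_def by simp
  ultimately have "(\<Prod>j\<in>Cset n w k. wbox n p q (box_idx (w ! j)) k) = 0"
    using j by (intro prod_zero) blast+
  then show ?thesis
    unfolding wt_def using k by (intro prod_zero) blast+
qed

lemma wt_block_word:
  assumes "1 \<le> n"
  shows "wt n p q (block_word n c) = (\<Prod>k\<in>{1..n}. wbox n p q k k ^ c k)"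
  unfolding wt_def
proof (rule prod.cong[OF refl])
  fix k assume k: "k \<in> {1..n}"
  have "(\<Prod>j\<in>Cset n (block_word n c) k. wbox n p q (box_idx (block_word n c ! j)) k)
      = (\<Prod>j\<in>Cset n (block_word n c) k. wbox n p q k k)"
    using gap_consistent_block_word[OF assms, of c] k unfolding gap_consistent_def by simp
  also have "\<dots> = wbox n p q k k ^ c k"
    using Cset_block_word[OF assms k] block_start_Suc[of k c] k by simp
  finally show "(\<Prod>j\<in>Cset n (block_word n c) k. wbox n p q (box_idx (block_word n c ! j)) k)
      = wbox n p q k k ^ c k" .
qed

lemma Zpart_eq_sum_exponents:
  assumes "1 \<le> n" and "n \<le> L" and "\<forall>i\<in>{1..n}. q i = 0"
  shows "Zpart L n p q = (\<Sum>c\<in>exponents (L - n) n. \<Prod>k\<in>{1..n}. wbox n p q k k ^ c k)"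
proof -
  have "finite (rooted_words L n)"
    using finite_Omega unfolding rooted_words_def by simp
  then have "Zpart L n p q = sum (wt n p q) {w \<in> rooted_words L n. gap_consistent n w}"
    unfolding Zpart_def rooted_words_def[symmetric]
    by (intro sum.mono_neutral_right) (auto intro: wt_eq_0[OF assms(3)])
  also have "\<dots> = (\<Sum>c\<in>exponents (L - n) n. wt n p q (block_word n c))"
    by (rule sum.reindex_bij_betw[OF bij_betw_block_word[OF assms(1,2)], symmetric])
  finally show ?thesis
    by (simp add: wt_block_word[OF assms(1)])
qed

theorem proposition5p8:
  fixes L n :: nat and p q :: "nat \<Rightarrow> 'a::field"
  assumes "1 \<le> n" and "n \<le> L"
    and "\<forall>i\<in>{1..n}. q i = 0"
    and "\<forall>i\<in>{1..n}. p i \<noteq> 0"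
  shows "Zpart L n p q = (\<Prod>i\<in>{1..n}. p i) ^ (L - n) * hcomp (L - n) n (\<lambda>i. 1 / p i)"
proof -
  define P where "P = (\<Prod>i\<in>{1..n}. p i)"
  have diag: "wbox n p q k k = P * (1 / p k)" if "k \<in> {1..n}" for k
    using wbox_diag_mult[OF that, of p q] assms(4) that unfolding P_def by (simp add: field_simps)
  have "Zpart L n p q = (\<Sum>c\<in>exponents (L - n) n. \<Prod>k\<in>{1..n}. (P * (1 / p k)) ^ c k)"
    unfolding Zpart_eq_sum_exponents[OF assms(1-3)] by (intro sum.cong prod.cong) (simp_all add: diag)
  also have "\<dots> = (\<Sum>c\<in>exponents (L - n) n. P ^ (L - n) * (\<Prod>k\<in>{1..n}. (1 / p k) ^ c k))"
  proof (intro sum.cong refl)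
    fix c assume "c \<in> exponents (L - n) n"
    then have "(\<Sum>k\<in>{1..n}. c k) = L - n"
      by (simp add: exponents_def)
    then show "(\<Prod>k\<in>{1..n}. (P * (1 / p k)) ^ c k) = P ^ (L - n) * (\<Prod>k\<in>{1..n}. (1 / p k) ^ c k)"
      by (simp only: power_mult_distrib prod.distrib power_sum[symmetric])
  qed
  also have "\<dots> = P ^ (L - n) * hcomp (L - n) n (\<lambda>i. 1 / p i)"
    by (simp add: hcomp_eq_sum_exponents sum_distrib_left)
  finally show ?thesis
    unfolding P_def .
qed

end
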